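(* For the hypercube $Q_n$: $str(Q_2)\ge6$, $str(Q_3)\ge11$, $str(Q_4)\ge21$, and $str(Q_n)\ge 2^n+4n-12$ for all $n\ge5$.
   Context: $Q_n$ is the $n$-dimensional hypercube (vertex set $\mathbb Z_2^n$, adjacency iff differing in exactly one coordinate), of order $2^n$. For a graph $G$ of order $p$, a numbering is a bijection $f:V(G)\to[1,p]$; $str_f(G)=\max\{f(u)+f(v): uv\in E(G)\}$ and $str(G)=\min_f str_f(G)$. *)

theory Defs
  imports Main
begin

definition hypercube_vertices :: "nat \<Rightarrow> bool list set" where
  "hypercube_vertices n = {xs. length xs = n}"

definition hypercube_adj :: "bool list \<Rightarrow> bool list \<Rightarrow> bool" where
  "hypercube_adj u v \<longleftrightarrow> length u = length v \<and> card {i. i < length u \<and> u ! i \<noteq> v ! i} = 1"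

definition numberings :: "'a set \<Rightarrow> ('a \<Rightarrow> nat) set" where
  "numberings V = {f. bij_betw f V {1..card V}}"

definition strength_f :: "'a set \<Rightarrow> ('a \<Rightarrow> 'a \<Rightarrow> bool) \<Rightarrow> ('a \<Rightarrow> nat) \<Rightarrow> nat" where
  "strength_f V E f = Max {f u + f v | u v. u \<in> V \<and> v \<in> V \<and> E u v}"

definition strength :: "'a set \<Rightarrow> ('a \<Rightarrow> 'a \<Rightarrow> bool) \<Rightarrow> nat" where
  "strength V E = Min (strength_f V E ` numberings V)"

definition str_hypercube :: "nat \<Rightarrow> nat" where
  "str_hypercube n = strength (hypercube_vertices n) hypercube_adj"

end

theory Submission
  imports Defs
begin

(*
  Let f be a numbering of Q_n and S the set of the k vertices with the largest labels, all of
  them at least 2^n + 1 - k. The neighbours of S carry card N(S) distinct positive labels, so one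
  of them has label at least card N(S), and it is adjacent to a vertex of S; hence
  str_f(Q_n) >= 2^n + 1 - k + card N(S). In Q_n two distinct vertices have at most two common
  neighbours, and three vertices that pairwise have a common neighbour have one in common.
  Inclusion-exclusion then gives card N(S) >= n, 2n - 2 and 4n - 9 for k = 1, 2 and 4.
*)

lemma ex_label_ge_card:
  fixes f :: "'a \<Rightarrow> nat"
  assumes "finite U" "U \<noteq> {}" "inj_on f U" "\<And>u. u \<in> U \<Longrightarrow> 1 \<le> f u"
  obtains w where "w \<in> U" "card U \<le> f w"
proof -
  let ?M = "Max (f ` U)"
  have "?M \<in> f ` U"
    using assms(1,2) by (simp add: Max_in)
  then obtain w where w: "w \<in> U" "f w = ?M"
    by (metis imageE)
  have "f ` U \<subseteq> {1..?M}"
    using assms by (auto intro: Max_ge)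
  then have "card U \<le> ?M"
    using card_mono[of "{1..?M}" "f ` U"] card_image[OF assms(3)] by simp
  with w show ?thesis
    using that by simp
qed

lemma strength_f_ge_edge:
  assumes "finite V" "u \<in> V" "v \<in> V" "E u v"
  shows "f u + f v \<le> strength_f V E f"
proof -
  let ?S = "{f u + f v | u v. u \<in> V \<and> v \<in> V \<and> E u v}"
  have "?S \<subseteq> (\<lambda>(u, v). f u + f v) ` (V \<times> V)"
    by auto
  then have "finite ?S"
    using assms(1) finite_subset by blast
  then show ?thesis
    unfolding strength_f_def using assms by (auto intro: Max_ge)
qed

lemma strength_ge:
  assumes "finite V" "\<And>f. f \<in> numberings V \<Longrightarrow> B \<le> strength_f V E f"
  shows "B \<le> strength V E"
proof -
  let ?str = "strength_f V E ` numberings V"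
  obtain h where "bij_betw h {1..card V} V"
    using ex_bij_betw_nat_finite_1[OF assms(1)] by blast
  then have "inv_into {1..card V} h \<in> numberings V"
    by (simp add: numberings_def bij_betw_inv_into)
  then have "?str \<noteq> {}"
    by blast
  \<comment> \<open>\<open>numberings V\<close> is infinite (numberings are arbitrary outside \<open>V\<close>), but their
    strengths are maxima of sets of sums of two labels.\<close>
  moreover have "?str \<subseteq> Max ` Pow {..2 * card V}"
  proof
    fix s assume "s \<in> ?str"
    then obtain f where f: "bij_betw f V {1..card V}" and s: "s = strength_f V E f"
      by (auto simp: numberings_def)
    have "\<And>u. u \<in> V \<Longrightarrow> f u \<le> card V"
      using f by (force simp: bij_betw_def)
    then have "{f u + f v | u v. u \<in> V \<and> v \<in> V \<and> E u v} \<in> Pow {..2 * card V}"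
      by (auto simp: mult_2 intro!: add_mono)
    then show "s \<in> Max ` Pow {..2 * card V}"
      unfolding s strength_f_def by blast
  qed
  then have "finite ?str"
    by (rule finite_surj[rotated]) simp
  ultimately show ?thesis
    using assms(2) by (simp add: strength_def)
qed

lemma card_top_labels:
  assumes f: "bij_betw f V {1..p}" and "k \<le> p"
  shows "card {v \<in> V. p + 1 - k \<le> f v} = k"
proof -
  have "f ` V = {1..p}"
    using f by (simp add: bij_betw_def)
  have "f ` {v \<in> V. p + 1 - k \<le> f v} = f ` V \<inter> {p + 1 - k..}"
    by blast
  also have "\<dots> = {p + 1 - k..p}"
    using \<open>f ` V = {1..p}\<close> assms(2) by auto
  finally have "f ` {v \<in> V. p + 1 - k \<le> f v} = {p + 1 - k..p}" .
  then have "bij_betw f {v \<in> V. p + 1 - k \<le> f v} {p + 1 - k..p}"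
    using bij_betw_subset[OF f] by auto
  then show ?thesis
    using bij_betw_same_card assms(2) by fastforce
qed

lemma strength_f_ge_labelled_nbrs:
  assumes f: "bij_betw f V {1..card V}" and "finite V"
    and U: "U \<subseteq> V" "U \<noteq> {}" "\<And>w. w \<in> U \<Longrightarrow> \<exists>a\<in>V. E a w \<and> t \<le> f a"
  shows "t + card U \<le> strength_f V E f"
proof -
  have "finite U"
    using U(1) \<open>finite V\<close> by (rule finite_subset)
  moreover have "inj_on f U"
    using f U(1) by (auto simp: bij_betw_def intro: inj_on_subset)
  moreover have "\<And>u. u \<in> U \<Longrightarrow> 1 \<le> f u"
    using f U(1) by (force simp: bij_betw_def)
  ultimately obtain w where w: "w \<in> U" "card U \<le> f w"
    using U(2) ex_label_ge_card by metis
  then obtain a where "a \<in> V" "E a w" "t \<le> f a"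
    using U(3) by blast
  then have "f a + f w \<le> strength_f V E f"
    using w U(1) \<open>finite V\<close> by (auto intro: strength_f_ge_edge)
  with w \<open>t \<le> f a\<close> show ?thesis
    by linarith
qed

lemma card_Un3:
  assumes "finite A" "finite B" "finite C"
  shows "card (A \<union> B \<union> C) + card (A \<inter> B) + card (A \<inter> C) + card (B \<inter> C) =
    card A + card B + card C + card (A \<inter> B \<inter> C)"
proof -
  have "(A \<union> B) \<inter> C = (A \<inter> C) \<union> (B \<inter> C)" "(A \<inter> C) \<inter> (B \<inter> C) = A \<inter> B \<inter> C"
    by blast+
  then show ?thesis
    using assms card_Un_Int[of "A \<union> B" C] card_Un_Int[of A B] card_Un_Int[of "A \<inter> C" "B \<inter> C"]
    by simp
qed

lemma card_Un4:
  assumes "finite A" "finite B" "finite C" "finite D"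
  shows "card (A \<union> B \<union> C \<union> D)
      + card (A \<inter> B) + card (A \<inter> C) + card (A \<inter> D) + card (B \<inter> C) + card (B \<inter> D) + card (C \<inter> D)
      + card (A \<inter> B \<inter> C \<inter> D) =
    card A + card B + card C + card D
      + card (A \<inter> B \<inter> C) + card (A \<inter> B \<inter> D) + card (A \<inter> C \<inter> D) + card (B \<inter> C \<inter> D)"
proof -
  have "(A \<union> B \<union> C) \<inter> D = (A \<inter> D) \<union> (B \<inter> D) \<union> (C \<inter> D)"
    "(A \<inter> D) \<inter> (B \<inter> D) = A \<inter> B \<inter> D" "(A \<inter> D) \<inter> (C \<inter> D) = A \<inter> C \<inter> D"
    "(B \<inter> D) \<inter> (C \<inter> D) = B \<inter> C \<inter> D" "(A \<inter> D) \<inter> (B \<inter> D) \<inter> (C \<inter> D) = A \<inter> B \<inter> C \<inter> D"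
    by blast+
  then show ?thesis
    using assms card_Un_Int[of "A \<union> B \<union> C" D] card_Un3[of A B C]
      card_Un3[of "A \<inter> D" "B \<inter> D" "C \<inter> D"]
    by simp
qed

definition diff_coords :: "bool list \<Rightarrow> bool list \<Rightarrow> nat set" where
  "diff_coords x y = {i. i < length x \<and> x ! i \<noteq> y ! i}"

definition flip_coord :: "bool list \<Rightarrow> nat \<Rightarrow> bool list" where
  "flip_coord x i = x[i := \<not> x ! i]"

definition cube_nbrs :: "bool list \<Rightarrow> bool list set" where
  "cube_nbrs x = {y. hypercube_adj x y}"

lemma finite_diff_coords [simp]: "finite (diff_coords x y)"
  by (simp add: diff_coords_def)

lemma diff_coords_subset: "diff_coords x y \<subseteq> {..<length x}"
  by (auto simp: diff_coords_def)

lemma diff_coords_commute: "length x = length y \<Longrightarrow> diff_coords x y = diff_coords y x"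
  by (auto simp: diff_coords_def)

lemma diff_coords_trans:
  "length x = length y \<Longrightarrow> length y = length z \<Longrightarrow>
    diff_coords x z = (diff_coords x y - diff_coords y z) \<union> (diff_coords y z - diff_coords x y)"
  by (auto simp: diff_coords_def)

lemma diff_coords_empty_iff: "length x = length y \<Longrightarrow> diff_coords x y = {} \<longleftrightarrow> x = y"
  by (auto simp: diff_coords_def intro: nth_equalityI)

lemma length_flip_coord [simp]: "length (flip_coord x i) = length x"
  by (simp add: flip_coord_def)

lemma diff_coords_flip_coord: "i < length x \<Longrightarrow> diff_coords x (flip_coord x i) = {i}"
  by (auto simp: diff_coords_def flip_coord_def nth_list_update)

lemma mem_cube_nbrs_iff: "y \<in> cube_nbrs x \<longleftrightarrow> length y = length x \<and> card (diff_coords x y) = 1"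
  by (auto simp: cube_nbrs_def hypercube_adj_def diff_coords_def)

lemma flip_coord_eq:
  assumes "length y = length x" "diff_coords x y = {i}"
  shows "y = flip_coord x i"
proof -
  have "i < length x"
    using assms(2) diff_coords_subset by blast
  have "diff_coords y (flip_coord x i) =
      (diff_coords y x - diff_coords x (flip_coord x i)) \<union> (diff_coords x (flip_coord x i) - diff_coords y x)"
    by (rule diff_coords_trans) (simp_all add: assms(1))
  also have "\<dots> = {}"
    using diff_coords_flip_coord[OF \<open>i < length x\<close>] assms diff_coords_commute[of y x] by simp
  finally have "diff_coords y (flip_coord x i) = {}" .
  then show ?thesis
    using diff_coords_empty_iff assms(1) by simp
qed

lemma cube_nbrs_eq: "cube_nbrs x = flip_coord x ` {..<length x}"
proof
  show "cube_nbrs x \<subseteq> flip_coord x ` {..<length x}"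
  proof
    fix y assume "y \<in> cube_nbrs x"
    then obtain i where "length y = length x" "diff_coords x y = {i}"
      by (auto simp: mem_cube_nbrs_iff card_Suc_eq)
    moreover from this have "i < length x"
      using diff_coords_subset by blast
    ultimately show "y \<in> flip_coord x ` {..<length x}"
      using flip_coord_eq by blast
  qed
  show "flip_coord x ` {..<length x} \<subseteq> cube_nbrs x"
    by (auto simp: mem_cube_nbrs_iff diff_coords_flip_coord)
qed

lemma finite_cube_nbrs [simp]: "finite (cube_nbrs x)"
  by (simp add: cube_nbrs_eq)

lemma card_cube_nbrs: "card (cube_nbrs x) = length x"
proof -
  have "inj_on (flip_coord x) {..<length x}"
    by (rule inj_onI) (metis diff_coords_flip_coord lessThan_iff singleton_inject)
  then show ?thesis
    by (simp add: cube_nbrs_eq card_image)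
qed

lemma cube_common_nbr:
  assumes "y \<in> cube_nbrs a" "y \<in> cube_nbrs b" "a \<noteq> b"
  shows "card (diff_coords a b) = 2" "\<exists>i\<in>diff_coords a b. y = flip_coord a i"
proof -
  obtain i j where ij: "diff_coords a y = {i}" "diff_coords b y = {j}"
    and len: "length y = length a" "length y = length b"
    using assms(1,2) by (auto simp: mem_cube_nbrs_iff card_Suc_eq)
  have "diff_coords a b = (diff_coords a y - diff_coords y b) \<union> (diff_coords y b - diff_coords a y)"
    by (rule diff_coords_trans) (use len in simp_all)
  also have "\<dots> = ({i} - {j}) \<union> ({j} - {i})"
    using diff_coords_commute[of y b] ij len by simp
  finally have "diff_coords a b = ({i} - {j}) \<union> ({j} - {i})" .
  moreover have "diff_coords a b \<noteq> {}"
    using diff_coords_empty_iff assms(3) len by simp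
  ultimately have "i \<noteq> j" "diff_coords a b = {i, j}"
    by auto
  then show "card (diff_coords a b) = 2" "\<exists>i\<in>diff_coords a b. y = flip_coord a i"
    using flip_coord_eq ij(1) len(1) by auto
qed

lemma card_cube_common_nbrs_le:
  assumes "a \<noteq> b"
  shows "card (cube_nbrs a \<inter> cube_nbrs b) \<le> 2"
proof (cases "cube_nbrs a \<inter> cube_nbrs b = {}")
  case False
  have "cube_nbrs a \<inter> cube_nbrs b \<subseteq> flip_coord a ` diff_coords a b"
    using cube_common_nbr(2) assms by blast
  then have "card (cube_nbrs a \<inter> cube_nbrs b) \<le> card (diff_coords a b)"
    by (meson card_image_le card_mono finite_diff_coords finite_imageI le_trans)
  also have "\<dots> = 2"
    using False cube_common_nbr(1) assms by blast
  finally show ?thesis .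
qed simp

lemma flip_coord_mem_cube_nbrs:
  assumes "length a = length b" "card (diff_coords a b) = 2" "i \<in> diff_coords a b"
  shows "flip_coord a i \<in> cube_nbrs b"
proof -
  have i: "i < length a"
    using assms(3) diff_coords_subset by blast
  have "diff_coords b (flip_coord a i) =
      (diff_coords b a - diff_coords a (flip_coord a i)) \<union> (diff_coords a (flip_coord a i) - diff_coords b a)"
    by (rule diff_coords_trans) (simp_all add: assms(1))
  also have "\<dots> = diff_coords a b - {i}"
    using diff_coords_flip_coord[OF i] diff_coords_commute[OF assms(1)] assms(3) by auto
  finally show ?thesis
    using assms by (simp add: mem_cube_nbrs_iff)
qed

lemma cube_common_nbr_of_three:
  assumes "a \<noteq> b" "a \<noteq> c" "b \<noteq> c"
    and ab: "cube_nbrs a \<inter> cube_nbrs b \<noteq> {}" and ac: "cube_nbrs a \<inter> cube_nbrs c \<noteq> {}"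
    and "cube_nbrs b \<inter> cube_nbrs c \<noteq> {}"
  shows "cube_nbrs a \<inter> cube_nbrs b \<inter> cube_nbrs c \<noteq> {}"
proof -
  have len: "length a = length b" "length a = length c"
    using ab ac by (auto simp: mem_cube_nbrs_iff)
  have card2: "card (diff_coords a b) = 2" "card (diff_coords a c) = 2" "card (diff_coords b c) = 2"
    using cube_common_nbr(1) assms by blast+
  have "diff_coords b c =
      (diff_coords b a - diff_coords a c) \<union> (diff_coords a c - diff_coords b a)"
    by (rule diff_coords_trans) (use len in simp_all)
  then have bc_eq: "diff_coords b c =
      (diff_coords a b - diff_coords a c) \<union> (diff_coords a c - diff_coords a b)"
    using diff_coords_commute[OF len(1)] by simp
  have "diff_coords a b \<inter> diff_coords a c \<noteq> {}"
  proof
    assume "diff_coords a b \<inter> diff_coords a c = {}"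
    then have "card (diff_coords b c) = card (diff_coords a b) + card (diff_coords a c)"
      using bc_eq card_Un_disjoint[of "diff_coords a b" "diff_coords a c"] by (simp add: Diff_triv)
    with card2 show False
      by simp
  qed
  then obtain k where "k \<in> diff_coords a b" "k \<in> diff_coords a c"
    by blast
  moreover have "k < length a"
    using calculation diff_coords_subset by blast
  ultimately have "flip_coord a k \<in> cube_nbrs a \<inter> cube_nbrs b \<inter> cube_nbrs c"
    using flip_coord_mem_cube_nbrs len card2
    by (auto simp: mem_cube_nbrs_iff diff_coords_flip_coord)
  then show ?thesis
    by blast
qed

lemma cube_pairwise_common_nbrs_bound:
  assumes "a \<noteq> b" "a \<noteq> c" "b \<noteq> c"
  shows "card (cube_nbrs a \<inter> cube_nbrs b) + card (cube_nbrs a \<inter> cube_nbrs c)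
      + card (cube_nbrs b \<inter> cube_nbrs c) \<le> 4 + 2 * card (cube_nbrs a \<inter> cube_nbrs b \<inter> cube_nbrs c)"
proof -
  have le2: "card (cube_nbrs a \<inter> cube_nbrs b) \<le> 2" "card (cube_nbrs a \<inter> cube_nbrs c) \<le> 2"
    "card (cube_nbrs b \<inter> cube_nbrs c) \<le> 2"
    using card_cube_common_nbrs_le assms by blast+
  show ?thesis
  proof (cases "cube_nbrs a \<inter> cube_nbrs b \<noteq> {} \<and> cube_nbrs a \<inter> cube_nbrs c \<noteq> {}
      \<and> cube_nbrs b \<inter> cube_nbrs c \<noteq> {}")
    case True
    then have "card (cube_nbrs a \<inter> cube_nbrs b \<inter> cube_nbrs c) \<noteq> 0"
      using cube_common_nbr_of_three assms by simp
    with le2 show ?thesis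
      by linarith
  next
    case False
    with le2 show ?thesis
      by auto
  qed
qed

lemma card_cube_nbrs_Un2:
  assumes "a \<noteq> b" "length a = n" "length b = n"
  shows "2 * n \<le> card (cube_nbrs a \<union> cube_nbrs b) + 2"
  using card_Un_Int[of "cube_nbrs a" "cube_nbrs b"] card_cube_common_nbrs_le[OF assms(1)]
    card_cube_nbrs[of a] card_cube_nbrs[of b] assms(2,3)
  by simp

lemma card_cube_nbrs_Un4:
  assumes "a \<noteq> b" "a \<noteq> c" "a \<noteq> d" "b \<noteq> c" "b \<noteq> d" "c \<noteq> d"
    and "length a = n" "length b = n" "length c = n" "length d = n"
  shows "4 * n \<le> card (cube_nbrs a \<union> cube_nbrs b \<union> cube_nbrs c \<union> cube_nbrs d) + 9"
proof -
  let ?A = "cube_nbrs a" and ?B = "cube_nbrs b" and ?C = "cube_nbrs c" and ?D = "cube_nbrs d"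
  define P where "P = card (?A \<inter> ?B) + card (?A \<inter> ?C) + card (?A \<inter> ?D)
    + card (?B \<inter> ?C) + card (?B \<inter> ?D) + card (?C \<inter> ?D)"
  define T where "T = card (?A \<inter> ?B \<inter> ?C) + card (?A \<inter> ?B \<inter> ?D)
    + card (?A \<inter> ?C \<inter> ?D) + card (?B \<inter> ?C \<inter> ?D)"
  define q where "q = card (?A \<inter> ?B \<inter> ?C \<inter> ?D)"
  have incl_excl: "card (?A \<union> ?B \<union> ?C \<union> ?D) + P + q = 4 * n + T"
    using card_Un4[of ?A ?B ?C ?D] assms(7-10) unfolding P_def T_def q_def
    by (simp add: card_cube_nbrs)
  show ?thesis
  proof (cases "q = 0")
    case True
    have "2 * P \<le> 16 + 2 * T"
      using cube_pairwise_common_nbrs_bound[OF assms(1,2,4)] cube_pairwise_common_nbrs_bound[OF assms(1,3,5)]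
        cube_pairwise_common_nbrs_bound[OF assms(2,3,6)] cube_pairwise_common_nbrs_bound[OF assms(4,5,6)]
      unfolding P_def T_def mult_2 by linarith
    with incl_excl True show ?thesis
      by linarith
  next
    case False
    have "P \<le> 12"
      using card_cube_common_nbrs_le[OF assms(1)] card_cube_common_nbrs_le[OF assms(2)]
        card_cube_common_nbrs_le[OF assms(3)] card_cube_common_nbrs_le[OF assms(4)]
        card_cube_common_nbrs_le[OF assms(5)] card_cube_common_nbrs_le[OF assms(6)]
      unfolding P_def by linarith
    moreover have "4 * q \<le> T"
    proof -
      have "q \<le> card (?A \<inter> ?B \<inter> ?C)" "q \<le> card (?A \<inter> ?B \<inter> ?D)"
        "q \<le> card (?A \<inter> ?C \<inter> ?D)" "q \<le> card (?B \<inter> ?C \<inter> ?D)"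
        unfolding q_def by (auto intro!: card_mono)
      then show ?thesis
        unfolding T_def by linarith
    qed
    ultimately show ?thesis
      using incl_excl False by linarith
  qed
qed

lemma finite_hypercube_vertices: "finite (hypercube_vertices n)"
  using finite_lists_length_eq[of "UNIV :: bool set" n] by (simp add: hypercube_vertices_def)

lemma card_hypercube_vertices: "card (hypercube_vertices n) = 2 ^ n"
  using card_lists_length_eq[of "UNIV :: bool set" n] by (simp add: hypercube_vertices_def)

lemma str_hypercube_ge_top_nbrs:
  assumes "1 \<le> n" "1 \<le> k" "k \<le> 2 ^ n"
    and nbrs: "\<And>S. S \<subseteq> hypercube_vertices n \<Longrightarrow> card S = k \<Longrightarrow> b \<le> card (\<Union>a\<in>S. cube_nbrs a)"
  shows "2 ^ n + 1 - k + b \<le> str_hypercube n"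
  unfolding str_hypercube_def
proof (rule strength_ge[OF finite_hypercube_vertices])
  let ?V = "hypercube_vertices n"
  fix f assume "f \<in> numberings ?V"
  then have f_card: "bij_betw f ?V {1..card ?V}" and f: "bij_betw f ?V {1..2 ^ n}"
    by (simp_all add: numberings_def card_hypercube_vertices)
  define S where "S = {v \<in> ?V. 2 ^ n + 1 - k \<le> f v}"
  let ?U = "\<Union>a\<in>S. cube_nbrs a"
  have "card S = k"
    unfolding S_def using card_top_labels[OF f assms(3)] .
  then obtain a where "a \<in> S"
    using assms(2) by fastforce
  then have "cube_nbrs a \<noteq> {}"
    using assms(1) card_cube_nbrs[of a] by (auto simp: S_def hypercube_vertices_def)
  with \<open>a \<in> S\<close> have "?U \<noteq> {}"
    by blast
  moreover have "?U \<subseteq> ?V"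
    by (auto simp: S_def hypercube_vertices_def mem_cube_nbrs_iff)
  moreover have "\<exists>a\<in>?V. hypercube_adj a w \<and> 2 ^ n + 1 - k \<le> f a" if "w \<in> ?U" for w
    using that by (auto simp: S_def cube_nbrs_def)
  ultimately have "2 ^ n + 1 - k + card ?U \<le> strength_f ?V hypercube_adj f"
    by (intro strength_f_ge_labelled_nbrs[OF f_card finite_hypercube_vertices])
  moreover have "b \<le> card ?U"
    using nbrs \<open>card S = k\<close> by (simp add: S_def)
  ultimately show "2 ^ n + 1 - k + b \<le> strength_f ?V hypercube_adj f"
    by linarith
qed

lemma str_hypercube_ge_1:
  assumes "1 \<le> n"
  shows "2 ^ n + n \<le> str_hypercube n"
proof -
  have "n \<le> card (\<Union>a\<in>S. cube_nbrs a)" if "S \<subseteq> hypercube_vertices n" "card S = 1" for S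
  proof -
    obtain a where "S = {a}"
      using \<open>card S = 1\<close> card_1_singletonE by blast
    then show ?thesis
      using that(1) card_cube_nbrs[of a] by (simp add: hypercube_vertices_def)
  qed
  then show ?thesis
    using str_hypercube_ge_top_nbrs[of n 1 n] assms by simp
qed

lemma str_hypercube_ge_2:
  assumes "1 \<le> n"
  shows "2 ^ n + 2 * n \<le> str_hypercube n + 3"
proof -
  have "2 ^ 1 \<le> (2::nat) ^ n"
    using assms by (rule power_increasing) simp
  moreover have "2 * n - 2 \<le> card (\<Union>a\<in>S. cube_nbrs a)"
    if "S \<subseteq> hypercube_vertices n" "card S = 2" for S
  proof -
    obtain a b where "S = {a, b}" "a \<noteq> b"
      using \<open>card S = 2\<close> by (auto simp: card_Suc_eq numeral_2_eq_2)
    then show ?thesis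
      using card_cube_nbrs_Un2[of a b n] that(1) by (auto simp: hypercube_vertices_def)
  qed
  ultimately show ?thesis
    using str_hypercube_ge_top_nbrs[of n 2 "2 * n - 2"] assms by simp
qed

lemma str_hypercube_ge_4:
  assumes "2 \<le> n"
  shows "2 ^ n + 4 * n \<le> str_hypercube n + 12"
proof -
  have "2 ^ 2 \<le> (2::nat) ^ n"
    using assms by (rule power_increasing) simp
  moreover have "4 * n - 9 \<le> card (\<Union>a\<in>S. cube_nbrs a)"
    if "S \<subseteq> hypercube_vertices n" "card S = 4" for S
  proof -
    obtain a b c d where "S = {a, b, c, d}"
      "a \<noteq> b" "a \<noteq> c" "a \<noteq> d" "b \<noteq> c" "b \<noteq> d" "c \<noteq> d"
      using \<open>card S = 4\<close> by (auto simp: card_Suc_eq numeral_eq_Suc)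
    then show ?thesis
      using card_cube_nbrs_Un4[of a b c d n] that(1) by (auto simp: hypercube_vertices_def Un_assoc)
  qed
  ultimately show ?thesis
    using str_hypercube_ge_top_nbrs[of n 4 "4 * n - 9"] assms by simp
qed

theorem mainTheorem17:
  shows "str_hypercube 2 \<ge> 6 \<and> str_hypercube 3 \<ge> 11 \<and> str_hypercube 4 \<ge> 21 \<and>
         (\<forall>n::nat. n \<ge> 5 \<longrightarrow> int (str_hypercube n) \<ge> 2 ^ n + 4 * int n - 12)"
proof (intro conjI allI impI)
  show "str_hypercube 2 \<ge> 6"
    using str_hypercube_ge_1[of 2] by simp
  show "str_hypercube 3 \<ge> 11"
    using str_hypercube_ge_2[of 3] by simp
  show "str_hypercube 4 \<ge> 21"
    using str_hypercube_ge_2[of 4] by simp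
  fix n :: nat
  assume "n \<ge> 5"
  then have "int (2 ^ n + 4 * n) \<le> int (str_hypercube n + 12)"
    using str_hypercube_ge_4[of n] by (simp only: of_nat_le_iff)
  then show "int (str_hypercube n) \<ge> 2 ^ n + 4 * int n - 12"
    by simp
qed

end
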